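(* Let $\mathcal H$ be a finite-dimensional complex Hilbert space, $\rho$ a density operator on $\mathcal H$, $V,W$ unitary operators on $\mathcal H$, and $|\phi\rangle$ any unit vector. Let $F=\operatorname{Tr}(W^{\dagger}V^{\dagger}WV\rho)$, and define $\theta_{VW}^{\phi}=\arccos\big\|\sqrt\rho\,(VW)^{\dagger}|\phi\rangle\big\|$ and $\theta_{WV}^{\phi}=\arccos\big\|\sqrt\rho\,(WV)^{\dagger}|\phi\rangle\big\|$ (the norms lie in $[0,1]$). Then $$|F|\le\cos\big(\theta^{\phi}_{VW}-\theta^{\phi}_{WV}\big).$$
   Context: $\|\cdot\|$ is the vector norm on $\mathcal H$; $\sqrt\rho$ is the positive square root of $\rho$. *)

theory Defs
  imports "HOL-Analysis.Analysis"
begin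

text \<open>A finite-dimensional complex Hilbert space is modelled as complex^'n (with 'n a
finite index type); operators are complex matrices complex^'n^'n.\<close>

definition cadj :: "complex^'n^'m \<Rightarrow> complex^'m^'n" where
  "cadj A = (\<chi> i j. cnj (A $ j $ i))"

definition ctrace :: "complex^'n^'n \<Rightarrow> complex" where
  "ctrace A = (\<Sum>i\<in>UNIV. A $ i $ i)"

definition cinner :: "complex^'n \<Rightarrow> complex^'n \<Rightarrow> complex" where
  "cinner x y = (\<Sum>i\<in>UNIV. cnj (x $ i) * y $ i)"

definition hermitian :: "complex^'n^'n \<Rightarrow> bool" where
  "hermitian A \<longleftrightarrow> cadj A = A"

definition psd :: "complex^'n^'n \<Rightarrow> bool" where
  "psd A \<longleftrightarrow> hermitian A \<and> (\<forall>x. cinner x (A *v x) \<in> \<real> \<and> 0 \<le> Re (cinner x (A *v x)))"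

definition density_op :: "complex^'n^'n \<Rightarrow> bool" where
  "density_op \<rho> \<longleftrightarrow> psd \<rho> \<and> ctrace \<rho> = 1"

definition unitary :: "complex^'n^'n \<Rightarrow> bool" where
  "unitary U \<longleftrightarrow> cadj U ** U = mat 1 \<and> U ** cadj U = mat 1"

definition psd_sqrt :: "complex^'n^'n \<Rightarrow> complex^'n^'n" where
  "psd_sqrt A = (THE S. psd S \<and> S ** S = A)"

end

theory Submission
  imports Defs
begin

text \<open>Diagonalise \<open>\<rho> = \<Sum>\<^sub>e \<lambda>\<^sub>e |e\<rangle>\<langle>e|\<close> in an orthonormal eigenbasis and put \<open>X = VW\<close>, \<open>Y = WV\<close>.
Then \<open>F = \<Sum>\<^sub>e \<lambda>\<^sub>e \<langle>Xe, Ye\<rangle>\<close> and \<open>p\<^sup>2 = \<parallel>\<surd>\<rho> X\<^sup>\<dagger>\<phi>\<parallel>\<^sup>2 = \<Sum>\<^sub>e \<lambda>\<^sub>e |\<langle>Xe, \<phi>\<rangle>|\<^sup>2\<close>, and likewise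
\<open>q\<^sup>2\<close> with \<open>Y\<close>. Splitting the unit vectors \<open>Xe\<close>, \<open>Ye\<close> into their components along \<open>\<phi>\<close> and
orthogonal to \<open>\<phi>\<close>, the weighted Cauchy--Schwarz inequality applied to both parts gives
\<open>|F| \<le> p q + \<surd>(1 - p\<^sup>2) \<surd>(1 - q\<^sup>2) = cos (arccos p - arccos q)\<close>.\<close>

section \<open>The complex inner product\<close>

lemma cinner_add_right: "cinner x (y + z) = cinner x y + cinner x z"
  by (simp add: cinner_def sum.distrib distrib_left)

lemma cinner_add_left: "cinner (x + y) z = cinner x z + cinner y z"
  by (simp add: cinner_def sum.distrib distrib_right)

lemma cinner_diff_right: "cinner x (y - z) = cinner x y - cinner x z"
  by (simp add: cinner_def sum_subtractf right_diff_distrib)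

lemma cinner_diff_left: "cinner (x - y) z = cinner x z - cinner y z"
  by (simp add: cinner_def sum_subtractf left_diff_distrib)

lemma cinner_scale_right: "cinner x (c *s y) = c * cinner x y"
  by (simp add: cinner_def sum_distrib_left mult_ac)

lemma cinner_scale_left: "cinner (c *s x) y = cnj c * cinner x y"
  by (simp add: cinner_def sum_distrib_left mult_ac)

lemma cinner_scaleR_right: "cinner x (r *\<^sub>R y) = of_real r * cinner x y"
  by (simp add: cinner_def sum_distrib_left scaleR_conv_of_real[where 'a=complex] mult_ac)

lemma cinner_scaleR_left: "cinner (r *\<^sub>R x) y = of_real r * cinner x y"
  by (simp add: cinner_def sum_distrib_left scaleR_conv_of_real[where 'a=complex] mult_ac)

lemma cinner_sum_right: "cinner x (sum f S) = (\<Sum>s\<in>S. cinner x (f s))"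
  by (simp add: cinner_def sum_distrib_left sum.swap[of _ S])

lemma cinner_sum_left: "cinner (sum f S) y = (\<Sum>s\<in>S. cinner (f s) y)"
  by (simp add: cinner_def sum_distrib_right sum.swap[of _ S])

lemma cinner_zero_right [simp]: "cinner x 0 = 0"
  by (simp add: cinner_def)

lemma cnj_cinner: "cnj (cinner x y) = cinner y x"
  by (simp add: cinner_def mult_ac)

lemma cinner_self: "cinner x x = of_real (norm x ^ 2)"
proof -
  have norm_sq: "norm x ^ 2 = (\<Sum>i\<in>UNIV. cmod (x $ i) ^ 2)"
    by (simp add: norm_vec_def L2_set_def sum_nonneg)
  show ?thesis
    unfolding norm_sq cinner_def of_real_sum complex_norm_square by (simp add: mult_ac)
qed

lemma cinner_cauchy_schwarz: "cmod (cinner x y) \<le> norm x * norm y"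
proof -
  have "cmod (cinner x y) \<le> (\<Sum>i\<in>UNIV. \<bar>cmod (x$i)\<bar> * \<bar>cmod (y$i)\<bar>)"
    unfolding cinner_def by (rule order_trans[OF norm_sum]) (simp add: norm_mult)
  also have "\<dots> \<le> norm x * norm y"
    unfolding norm_vec_def by (rule L2_set_mult_ineq)
  finally show ?thesis .
qed

lemma cinner_split_along_unit:
  fixes x y \<phi> :: "complex^'n"
  assumes "norm \<phi> = 1"
  defines "x' \<equiv> x - cinner \<phi> x *s \<phi>" and "y' \<equiv> y - cinner \<phi> y *s \<phi>"
  shows "cinner x y = cinner x' y' + cinner x \<phi> * cnj (cinner y \<phi>)"
    and "norm x' ^ 2 = norm x ^ 2 - cmod (cinner x \<phi>) ^ 2"
proof -
  have \<phi>\<phi>: "cinner \<phi> \<phi> = 1" using assms(1) by (simp add: cinner_self)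
  have c1: "cinner \<phi> x = cnj (cinner x \<phi>)" and c2: "cinner \<phi> y = cnj (cinner y \<phi>)"
    by (simp_all add: cnj_cinner)
  show "cinner x y = cinner x' y' + cinner x \<phi> * cnj (cinner y \<phi>)"
    unfolding x'_def y'_def
    by (simp add: cinner_diff_left cinner_diff_right cinner_scale_left cinner_scale_right \<phi>\<phi> c1 c2
        algebra_simps)
  have "cinner x' x' = cinner x x - cinner x \<phi> * cnj (cinner x \<phi>)"
    unfolding x'_def
    by (simp add: cinner_diff_left cinner_diff_right cinner_scale_left cinner_scale_right \<phi>\<phi> c1
        algebra_simps)
  hence "of_real (norm x' ^ 2) = (of_real (norm x ^ 2 - cmod (cinner x \<phi>) ^ 2) :: complex)"
    by (simp only: cinner_self complex_norm_square[symmetric] of_real_diff)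
  thus "norm x' ^ 2 = norm x ^ 2 - cmod (cinner x \<phi>) ^ 2"
    by (simp only: of_real_eq_iff)
qed

lemma matrix_vector_mult_scaleR: "(A::complex^'n^'m) *v (r *\<^sub>R x) = r *\<^sub>R (A *v x)"
  by (simp add: vec_eq_iff matrix_vector_mult_def scaleR_conv_of_real[where 'a=complex]
      sum_distrib_left mult_ac)

lemma matrix_vector_mult_scale: "(A::complex^'n^'m) *v (c *s x) = c *s (A *v x)"
  by (simp add: vec_eq_iff matrix_vector_mult_def sum_distrib_left mult_ac)

lemma matrix_vector_mult_sum: "(A::complex^'n^'m) *v (sum f S) = (\<Sum>s\<in>S. A *v f s)"
  by (induction S rule: infinite_finite_induct) (auto simp: matrix_vector_right_distrib)

lemma mat_matrix_vector_mult: "mat c *v (x::complex^'n) = c *s x"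
  by (simp add: vec_eq_iff matrix_vector_mult_def mat_def if_distrib if_distribR cong: if_cong)

lemma of_real_scale_eq_scaleR: "of_real r *s (x::complex^'n) = r *\<^sub>R x"
  by (simp add: vec_eq_iff scaleR_conv_of_real[where 'a=complex])

lemma cinner_adj: "cinner x (A *v y) = cinner (cadj A *v x) y"
proof -
  have "cinner x (A *v y) = (\<Sum>i\<in>UNIV. \<Sum>j\<in>UNIV. cnj (x$i) * A$i$j * y$j)"
    by (simp add: cinner_def matrix_vector_mult_def sum_distrib_left mult.assoc)
  also have "\<dots> = (\<Sum>j\<in>UNIV. \<Sum>i\<in>UNIV. cnj (x$i) * A$i$j * y$j)"
    by (rule sum.swap)
  also have "\<dots> = cinner (cadj A *v x) y"
    by (simp add: cinner_def matrix_vector_mult_def cadj_def sum_distrib_right sum_distrib_left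
        mult_ac)
  finally show ?thesis .
qed

lemma cadj_cadj [simp]: "cadj (cadj A) = A"
  by (simp add: cadj_def vec_eq_iff)

lemma cadj_mult: "cadj (A ** B) = cadj B ** cadj A"
  by (simp add: cadj_def vec_eq_iff matrix_matrix_mult_def mult_ac)

lemma cadj_diff: "cadj (A - B) = cadj A - cadj B"
  by (simp add: cadj_def vec_eq_iff)

lemma isometry_mult:
  assumes "cadj V ** V = mat 1" and "cadj W ** W = mat 1"
  shows "cadj (V ** W) ** (V ** W) = mat 1"
proof -
  have "cadj (V ** W) ** (V ** W) = cadj W ** ((cadj V ** V) ** W)"
    by (simp add: cadj_mult matrix_mul_assoc)
  thus ?thesis using assms by simp
qed

lemma isometry_norm:
  assumes "cadj U ** U = mat 1"
  shows "norm (U *v x) = norm x"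
proof -
  have "cinner (U *v x) (U *v x) = cinner x (cadj U *v (U *v x))"
    using cinner_adj[of x "cadj U" "U *v x"] by simp
  also have "\<dots> = cinner x x"
    by (simp add: matrix_vector_mul_assoc assms)
  finally have "norm (U *v x) ^ 2 = norm x ^ 2"
    by (simp only: cinner_self of_real_eq_iff)
  thus ?thesis by simp
qed

lemma hermitian_cinner_swap: "hermitian A \<Longrightarrow> cinner x (A *v y) = cinner (A *v x) y"
  by (simp add: hermitian_def cinner_adj)

lemma hermitian_form_real:
  assumes "hermitian A"
  shows "cinner x (A *v x) = of_real (Re (cinner x (A *v x)))"
proof -
  have "cnj (cinner x (A *v x)) = cinner x (A *v x)"
    using assms by (metis cnj_cinner hermitian_cinner_swap)
  thus ?thesis by (simp add: complex_eq_iff)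
qed

text \<open>Expanding the form along the line \<open>x + t Bx\<close> gives \<open>2 t \<parallel>Bx\<parallel>\<^sup>2 + O(t\<^sup>2)\<close>,
which is negative for small \<open>t < 0\<close> unless \<open>Bx = 0\<close>.\<close>

lemma hermitian_kernel_of_form_min:
  fixes B :: "complex^'n^'n"
  assumes h: "hermitian B"
    and pos: "\<And>t::real. 0 \<le> Re (cinner (x + t *\<^sub>R (B *v x)) (B *v (x + t *\<^sub>R (B *v x))))"
    and z: "Re (cinner x (B *v x)) = 0"
  shows "B *v x = 0"
proof -
  define y where "y = B *v x"
  define c where "c = Re (cinner y (B *v y))"
  define q where "q = norm y ^ 2"
  have e1: "cinner x (B *v y) = of_real q"
    using hermitian_cinner_swap[OF h, of x y] by (simp add: y_def q_def cinner_self)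
  have e2: "cinner y (B *v x) = of_real q"
    by (simp add: y_def q_def cinner_self)
  have "Re (cinner (x + t *\<^sub>R y) (B *v (x + t *\<^sub>R y))) = 2 * t * q + t^2 * c" for t
    using z e1 e2
    by (simp add: matrix_vector_mult_scaleR cinner_add_left
        cinner_add_right cinner_scaleR_left cinner_scaleR_right c_def power2_eq_square algebra_simps)
  hence pos': "0 \<le> 2 * t * q + t^2 * c" for t
    using pos[of t] by (simp add: y_def)
  have "q = 0"
  proof (rule ccontr)
    assume "q \<noteq> 0"
    hence qp: "q > 0" by (simp add: q_def)
    define s where "s = q / (\<bar>c\<bar> + 1)"
    have sp: "s > 0" and sc: "s * \<bar>c\<bar> \<le> q"
      using qp by (auto simp: s_def field_simps)
    have "0 \<le> 2 * (-s) * q + (-s)^2 * c" by (rule pos')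
    also have "\<dots> \<le> -2 * s * q + s * (s * \<bar>c\<bar>)"
      using sp by (simp add: power2_eq_square mult_left_mono)
    also have "\<dots> \<le> -2 * s * q + s * q"
      using sp sc by (simp add: mult_left_mono)
    also have "\<dots> < 0" using sp qp by simp
    finally show False by simp
  qed
  thus ?thesis by (simp add: q_def y_def)
qed

lemma psd_form_zero_imp_kernel:
  assumes "psd S" and "cinner x (S *v x) = 0"
  shows "S *v x = 0"
  using assms by (intro hermitian_kernel_of_form_min) (auto simp: psd_def)

section \<open>The spectral theorem for Hermitian matrices\<close>

definition orthonormal :: "(complex^'n) set \<Rightarrow> bool" where
  "orthonormal E \<longleftrightarrow> (\<forall>e\<in>E. \<forall>f\<in>E. cinner e f = (if e = f then 1 else 0))"

text \<open>The eigenvalue of a unit eigenvector \<open>e\<close> is \<open>\<langle>e, Ae\<rangle>\<close>, so it need not be recorded separately.\<close>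

definition eigenvectors :: "complex^'n^'n \<Rightarrow> (complex^'n) set \<Rightarrow> bool" where
  "eigenvectors A E \<longleftrightarrow> (\<forall>e\<in>E. A *v e = cinner e (A *v e) *s e)"

definition orth_compl :: "(complex^'n) set \<Rightarrow> (complex^'n) set" where
  "orth_compl E = {z. \<forall>e\<in>E. cinner e z = 0}"

lemma orthonormal_norm:
  assumes "orthonormal E" and "e \<in> E"
  shows "norm e = 1"
proof -
  have "cinner e e = 1"
    using assms by (simp add: orthonormal_def)
  hence "of_real (norm e ^ 2) = (1::complex)" by (simp only: cinner_self)
  hence "norm e ^ 2 = 1" by (simp only: of_real_eq_1_iff)
  thus ?thesis using norm_ge_zero[of e] by (auto simp: power2_eq_1_iff)
qed

lemma subspace_orth_compl: "subspace (orth_compl E)"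
  unfolding subspace_def orth_compl_def by (simp add: cinner_add_right cinner_scaleR_right)

lemma hermitian_orth_compl_invariant:
  assumes h: "hermitian A" and ev: "eigenvectors A E" and z: "z \<in> orth_compl E"
  shows "A *v z \<in> orth_compl E"
proof -
  have "cinner e (A *v z) = 0" if e: "e \<in> E" for e
  proof -
    have "cinner e (A *v z) = cinner (A *v e) z"
      by (rule hermitian_cinner_swap[OF h])
    also have "\<dots> = cinner (cinner e (A *v e) *s e) z"
      using ev e by (simp add: eigenvectors_def)
    also have "\<dots> = 0"
      using z e by (simp add: cinner_scale_left orth_compl_def)
    finally show ?thesis .
  qed
  thus ?thesis by (simp add: orth_compl_def)
qed

lemma continuous_on_form: "continuous_on S (\<lambda>x::complex^'n. Re (cinner x (A *v x)))"
  unfolding cinner_def matrix_vector_mult_def by (intro continuous_intros)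

lemma form_max_on_subspace:
  fixes A :: "complex^'n^'n"
  assumes U: "subspace U" and nz: "z0 \<in> U" "z0 \<noteq> 0"
  obtains x0 where "x0 \<in> U" "norm x0 = 1"
    "\<And>z. z \<in> U \<Longrightarrow> Re (cinner z (A *v z)) \<le> Re (cinner x0 (A *v x0)) * norm z ^ 2"
proof -
  define K where "K = U \<inter> sphere 0 1"
  define f where "f = (\<lambda>x::complex^'n. Re (cinner x (A *v x)))"
  have cK: "compact K"
    unfolding K_def by (intro closed_Int_compact closed_subspace U compact_sphere)
  have "(1 / norm z0) *\<^sub>R z0 \<in> K"
    using nz U by (simp add: K_def subspace_scale)
  hence nK: "K \<noteq> {}" by auto
  obtain x0 where x0: "x0 \<in> K" and mx: "\<And>y. y \<in> K \<Longrightarrow> f y \<le> f x0"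
    using continuous_attains_sup[OF cK nK continuous_on_form] unfolding f_def by metis
  have "f z \<le> f x0 * norm z ^ 2" if z: "z \<in> U" for z
  proof (cases "z = 0")
    case True
    thus ?thesis by (simp add: f_def)
  next
    case False
    define u where "u = (1 / norm z) *\<^sub>R z"
    have "u \<in> K"
      using z False U by (simp add: K_def u_def subspace_scale)
    hence "f u \<le> f x0" by (rule mx)
    moreover have "f u = f z / norm z ^ 2"
      by (simp add: f_def u_def matrix_vector_mult_scaleR cinner_scaleR_left cinner_scaleR_right
          power2_eq_square)
    ultimately show ?thesis using False by (simp add: field_simps)
  qed
  moreover have "x0 \<in> U" "norm x0 = 1" using x0 by (auto simp: K_def)
  ultimately show ?thesis using that unfolding f_def by blast
qed

text \<open>With \<open>l\<close> the maximum of the form on the unit sphere of \<open>U\<close>, the form of \<open>l - A\<close> is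
nonnegative on \<open>U\<close> and vanishes at a maximiser, which is therefore an eigenvector.\<close>

lemma hermitian_eigenvector_in_invariant_subspace:
  fixes A :: "complex^'n^'n"
  assumes h: "hermitian A" and U: "subspace U" and inv: "\<And>z. z \<in> U \<Longrightarrow> A *v z \<in> U"
    and nz: "z0 \<in> U" "z0 \<noteq> 0"
  shows "\<exists>x\<in>U. norm x = 1 \<and> A *v x = cinner x (A *v x) *s x"
proof -
  obtain x0 where x0U: "x0 \<in> U" and x0n: "norm x0 = 1"
    and bound: "\<And>z. z \<in> U \<Longrightarrow> Re (cinner z (A *v z)) \<le> Re (cinner x0 (A *v x0)) * norm z ^ 2"
    using form_max_on_subspace[OF U nz] by blast
  define l where "l = Re (cinner x0 (A *v x0))"
  define B where "B = mat (of_real l) - A"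
  have Bv: "B *v v = l *\<^sub>R v - A *v v" for v
    by (simp add: B_def matrix_vector_mult_diff_rdistrib mat_matrix_vector_mult of_real_scale_eq_scaleR)
  have hB: "hermitian B"
    using h by (simp add: hermitian_def B_def cadj_def vec_eq_iff mat_def)
  have formB: "Re (cinner v (B *v v)) = l * norm v ^ 2 - Re (cinner v (A *v v))" for v
    by (simp add: Bv cinner_diff_right cinner_scaleR_right cinner_self)
  have "B *v x0 = 0"
  proof (rule hermitian_kernel_of_form_min[OF hB])
    fix t :: real
    have "B *v x0 \<in> U"
      unfolding Bv using U x0U inv[OF x0U] by (simp add: subspace_diff subspace_scale)
    hence "x0 + t *\<^sub>R (B *v x0) \<in> U"
      using U x0U by (simp add: subspace_add subspace_scale)
    thus "0 \<le> Re (cinner (x0 + t *\<^sub>R (B *v x0)) (B *v (x0 + t *\<^sub>R (B *v x0))))"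
      using bound unfolding formB l_def by simp
  next
    show "Re (cinner x0 (B *v x0)) = 0"
      using x0n by (simp add: formB l_def)
  qed
  hence Ax0: "A *v x0 = l *\<^sub>R x0" by (simp add: Bv)
  hence "cinner x0 (A *v x0) = of_real l"
    by (simp add: cinner_scaleR_right cinner_self x0n)
  thus ?thesis using x0U x0n Ax0 by (auto simp: of_real_scale_eq_scaleR)
qed

lemma hermitian_eigenbasis_extend:
  fixes A :: "complex^'n^'n"
  assumes h: "hermitian A"
  shows "finite E \<Longrightarrow> orthonormal E \<Longrightarrow> eigenvectors A E \<Longrightarrow>
    \<exists>E'. finite E' \<and> orthonormal E' \<and> eigenvectors A E' \<and> orth_compl E' = {0}"
proof (induction "dim (orth_compl E)" arbitrary: E rule: less_induct)
  case less
  show ?case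
  proof (cases "orth_compl E = {0}")
    case True
    thus ?thesis using less.prems by blast
  next
    case False
    then obtain z0 where z0: "z0 \<in> orth_compl E" "z0 \<noteq> 0"
      using subspace_0[OF subspace_orth_compl, of E] by blast
    obtain x where x: "x \<in> orth_compl E" "norm x = 1" "A *v x = cinner x (A *v x) *s x"
      using hermitian_eigenvector_in_invariant_subspace[OF h subspace_orth_compl
          hermitian_orth_compl_invariant[OF h less.prems(3)] z0] by blast
    have xx: "cinner x x = 1" using x(2) by (simp add: cinner_self)
    have ex: "cinner e x = 0" and xe: "cinner x e = 0" if "e \<in> E" for e
      using x(1) that cnj_cinner[of e x] by (auto simp: orth_compl_def)
    define E1 where "E1 = insert x E"
    have orth: "orthonormal E1"
      using less.prems(2) ex xe xx unfolding orthonormal_def E1_def by auto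
    have eig: "eigenvectors A E1"
      using less.prems(3) x(3) by (simp add: eigenvectors_def E1_def)
    have "orth_compl E1 \<subseteq> orth_compl E" "x \<in> orth_compl E - orth_compl E1"
      using x(1) xx by (auto simp: orth_compl_def E1_def)
    hence "orth_compl E1 \<subset> orth_compl E" by blast
    hence "span (orth_compl E1) \<subset> span (orth_compl E)"
      by (simp add: span_eq_iff[THEN iffD2, OF subspace_orth_compl])
    hence "dim (orth_compl E1) < dim (orth_compl E)" by (rule dim_psubset)
    moreover have "finite E1" using less.prems(1) by (simp add: E1_def)
    ultimately show ?thesis using less.hyps orth eig by blast
  qed
qed

lemma cinner_orthonormal_sum:
  assumes "finite E" and "orthonormal E" and "e \<in> E"
  shows "cinner e (\<Sum>f\<in>E. a f *s f) = a e"
proof -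
  have "cinner e (\<Sum>f\<in>E. a f *s f) = (\<Sum>f\<in>E. a f * (if e = f then 1 else 0))"
    using assms by (simp add: cinner_sum_right cinner_scale_right orthonormal_def)
  also have "\<dots> = a e" using assms by (simp add: if_distrib cong: if_cong)
  finally show ?thesis .
qed

lemma orthonormal_expansion:
  assumes fin: "finite E" and orth: "orthonormal E" and complete: "orth_compl E = {0}"
  shows "z = (\<Sum>e\<in>E. cinner e z *s e)"
proof -
  define w where "w = z - (\<Sum>e\<in>E. cinner e z *s e)"
  have "cinner f w = 0" if "f \<in> E" for f
    using cinner_orthonormal_sum[OF fin orth that, of "\<lambda>e. cinner e z"]
    by (simp add: w_def cinner_diff_right)
  hence "w \<in> orth_compl E" by (simp add: orth_compl_def)
  thus ?thesis using complete by (simp add: w_def)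
qed

lemma hermitian_eigenbasis:
  fixes A :: "complex^'n^'n"
  assumes "hermitian A"
  obtains E where "finite E" "orthonormal E" "eigenvectors A E"
    "\<And>z. z = (\<Sum>e\<in>E. cinner e z *s e)"
proof -
  obtain E where fin: "finite E" and orth: "orthonormal E" and "eigenvectors A E"
    and complete: "orth_compl E = {0}"
    using hermitian_eigenbasis_extend[OF assms, of "{}"]
    by (auto simp: orthonormal_def eigenvectors_def)
  thus ?thesis using that orthonormal_expansion[OF fin orth complete] by blast
qed

text \<open>\<open>spectral_sum c E = \<Sum>\<^sub>e\<^sub>\<in>\<^sub>E c e |e\<rangle>\<langle>e|\<close>.\<close>

definition spectral_sum :: "(complex^'n \<Rightarrow> complex) \<Rightarrow> (complex^'n) set \<Rightarrow> complex^'n^'n" where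
  "spectral_sum c E = (\<chi> i j. \<Sum>e\<in>E. c e * e$i * cnj (e$j))"

lemma spectral_sum_mult_vec: "spectral_sum c E *v z = (\<Sum>e\<in>E. (c e * cinner e z) *s e)"
proof -
  have "(spectral_sum c E *v z) $ i = (\<Sum>e\<in>E. ((c e * cinner e z) *s e) $ i)" for i
  proof -
    have "(spectral_sum c E *v z) $ i = (\<Sum>j\<in>UNIV. \<Sum>e\<in>E. c e * e$i * cnj (e$j) * z$j)"
      by (simp add: spectral_sum_def matrix_vector_mult_def sum_distrib_right)
    also have "\<dots> = (\<Sum>e\<in>E. \<Sum>j\<in>UNIV. c e * e$i * cnj (e$j) * z$j)"
      by (rule sum.swap)
    also have "\<dots> = (\<Sum>e\<in>E. ((c e * cinner e z) *s e) $ i)"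
      by (simp add: cinner_def sum_distrib_left sum_distrib_right mult_ac)
    finally show ?thesis .
  qed
  thus ?thesis by (simp add: vec_eq_iff)
qed

lemma spectral_sum_cong: "(\<And>e. e \<in> E \<Longrightarrow> c e = d e) \<Longrightarrow> spectral_sum c E = spectral_sum d E"
  unfolding spectral_sum_def by (simp add: vec_eq_iff)

lemma eigenbasis_spectral_sum:
  fixes A :: "complex^'n^'n"
  assumes ev: "eigenvectors A E" and expansion: "\<And>z. z = (\<Sum>e\<in>E. cinner e z *s e)"
  shows "A = spectral_sum (\<lambda>e. cinner e (A *v e)) E"
proof -
  have "A *v z = spectral_sum (\<lambda>e. cinner e (A *v e)) E *v z" for z
  proof -
    have "A *v z = A *v (\<Sum>e\<in>E. cinner e z *s e)"
      using expansion by metis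
    also have "\<dots> = (\<Sum>e\<in>E. (cinner e (A *v e) * cinner e z) *s e)"
      unfolding matrix_vector_mult_sum matrix_vector_mult_scale
    proof (rule sum.cong[OF refl])
      fix e assume "e \<in> E"
      hence "A *v e = cinner e (A *v e) *s e" using ev by (simp add: eigenvectors_def)
      thus "cinner e z *s (A *v e) = (cinner e (A *v e) * cinner e z) *s e"
        by (metis vector_smult_assoc mult.commute)
    qed
    finally show ?thesis by (simp add: spectral_sum_mult_vec)
  qed
  thus ?thesis by (subst matrix_eq) blast
qed

lemma hermitian_spectral_sum:
  assumes "\<And>e. e \<in> E \<Longrightarrow> cnj (c e) = c e"
  shows "hermitian (spectral_sum c E)"
proof -
  have "cadj (spectral_sum c E) $ i $ j = spectral_sum c E $ i $ j" for i j
    unfolding cadj_def spectral_sum_def using assms by (simp add: mult_ac)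
  thus ?thesis by (simp add: hermitian_def vec_eq_iff)
qed

lemma form_spectral_sum:
  "cinner x (spectral_sum c E *v x) = (\<Sum>e\<in>E. c e * of_real (cmod (cinner e x) ^ 2))"
proof -
  have "cinner x (spectral_sum c E *v x) = (\<Sum>e\<in>E. c e * (cinner e x * cnj (cinner e x)))"
    by (simp add: spectral_sum_mult_vec cinner_sum_right cinner_scale_right cnj_cinner mult_ac)
  thus ?thesis by (simp only: complex_norm_square)
qed

lemma spectral_sum_mult:
  assumes fin: "finite E" and orth: "orthonormal E"
  shows "spectral_sum c E ** spectral_sum d E = spectral_sum (\<lambda>e. c e * d e) E"
proof -
  have "(spectral_sum c E ** spectral_sum d E) *v z = spectral_sum (\<lambda>e. c e * d e) E *v z" for z
  proof -
    have "(spectral_sum c E ** spectral_sum d E) *v z = spectral_sum c E *v (spectral_sum d E *v z)"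
      by (simp add: matrix_vector_mul_assoc)
    also have "\<dots> = (\<Sum>e\<in>E. (c e * (d e * cinner e z)) *s e)"
      unfolding spectral_sum_mult_vec[of c] spectral_sum_mult_vec[of d]
      by (intro sum.cong refl) (simp add: cinner_orthonormal_sum[OF fin orth])
    also have "\<dots> = spectral_sum (\<lambda>e. c e * d e) E *v z"
      by (simp add: spectral_sum_mult_vec mult_ac)
    finally show ?thesis .
  qed
  thus ?thesis by (subst matrix_eq) blast
qed

lemma ctrace_mult_spectral_sum:
  "ctrace (M ** spectral_sum c E) = (\<Sum>e\<in>E. c e * cinner e (M *v e))"
proof -
  have "ctrace (M ** spectral_sum c E)
      = (\<Sum>i\<in>UNIV. \<Sum>k\<in>UNIV. \<Sum>e\<in>E. M$i$k * (c e * e$k * cnj (e$i)))"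
    by (simp add: ctrace_def matrix_matrix_mult_def spectral_sum_def sum_distrib_left)
  also have "\<dots> = (\<Sum>i\<in>UNIV. \<Sum>e\<in>E. \<Sum>k\<in>UNIV. M$i$k * (c e * e$k * cnj (e$i)))"
    by (intro sum.cong refl sum.swap)
  also have "\<dots> = (\<Sum>e\<in>E. \<Sum>i\<in>UNIV. \<Sum>k\<in>UNIV. M$i$k * (c e * e$k * cnj (e$i)))"
    by (rule sum.swap)
  also have "\<dots> = (\<Sum>e\<in>E. c e * cinner e (M *v e))"
    by (simp add: cinner_def matrix_vector_mult_def sum_distrib_left mult_ac)
  finally show ?thesis .
qed

lemma ctrace_spectral_sum:
  assumes "orthonormal E"
  shows "ctrace (spectral_sum c E) = (\<Sum>e\<in>E. c e)"
  using ctrace_mult_spectral_sum[of "mat 1" c E] assms by (simp add: orthonormal_def)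

lemma norm_orthonormal_sum:
  assumes fin: "finite E" and orth: "orthonormal E"
  shows "norm (\<Sum>e\<in>E. a e *s e) ^ 2 = (\<Sum>e\<in>E. cmod (a e) ^ 2)"
proof -
  have "cinner (\<Sum>e\<in>E. a e *s e) (\<Sum>e\<in>E. a e *s e) = (\<Sum>e\<in>E. cnj (a e) * a e)"
    by (simp add: cinner_sum_left cinner_scale_left cinner_orthonormal_sum[OF fin orth])
  also have "\<dots> = of_real (\<Sum>e\<in>E. cmod (a e) ^ 2)"
    unfolding of_real_sum complex_norm_square by (simp add: mult.commute)
  finally show ?thesis
    by (simp only: cinner_self of_real_eq_iff)
qed

section \<open>The positive square root\<close>

text \<open>If \<open>S\<^sup>2 = T\<^sup>2\<close> and \<open>(S - T) x = m x\<close>, then \<open>S (S - T) + (S - T) T = 0\<close> has form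
\<open>m (\<langle>x,Sx\<rangle> + \<langle>x,Tx\<rangle>)\<close> at \<open>x\<close>; for \<open>m \<noteq> 0\<close> both nonnegative terms vanish, so \<open>Sx = Tx = 0\<close>.\<close>

lemma psd_square_eq_diff_eigenvalue:
  fixes S T :: "complex^'n^'n" and m :: real
  assumes pS: "psd S" and pT: "psd T" and eq: "S ** S = T ** T"
    and Dx: "(S - T) *v x = of_real m *s x" and x: "x \<noteq> 0"
  shows "m = 0"
proof (rule ccontr)
  assume m0: "m \<noteq> 0"
  define D where "D = S - T"
  have hD: "hermitian D"
    using pS pT by (simp add: D_def psd_def hermitian_def cadj_diff)
  have Dv: "D *v y = S *v y - T *v y" for y
    by (simp add: D_def matrix_vector_mult_diff_rdistrib)
  have "S *v (D *v x) + D *v (T *v x) = (S ** S) *v x - (T ** T) *v x"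
    unfolding Dv matrix_vector_mult_diff_distrib by (simp add: matrix_vector_mul_assoc)
  hence z: "of_real m *s (S *v x) + D *v (T *v x) = 0"
    using Dx by (simp add: D_def matrix_vector_mult_scale eq)
  have "cinner x (D *v (T *v x)) = of_real m * cinner x (T *v x)"
    using hermitian_cinner_swap[OF hD, of x "T *v x"] Dx by (simp add: D_def cinner_scale_left)
  hence "of_real m * (cinner x (S *v x) + cinner x (T *v x)) = 0"
    using arg_cong[OF z, of "cinner x"] by (simp add: cinner_add_right cinner_scale_right distrib_left)
  hence s0: "cinner x (S *v x) + cinner x (T *v x) = 0"
    using m0 by simp
  have "Re (cinner x (S *v x)) \<ge> 0" "Re (cinner x (T *v x)) \<ge> 0"
    using pS pT by (simp_all add: psd_def)
  hence "Re (cinner x (S *v x)) = 0" "Re (cinner x (T *v x)) = 0"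
    using arg_cong[OF s0, of Re] by auto
  moreover have "cinner x (S *v x) = of_real (Re (cinner x (S *v x)))"
    "cinner x (T *v x) = of_real (Re (cinner x (T *v x)))"
    using pS pT unfolding psd_def by (blast intro: hermitian_form_real)+
  ultimately have "cinner x (S *v x) = 0" "cinner x (T *v x) = 0"
    by (metis of_real_0)+
  hence "S *v x = 0" "T *v x = 0"
    using psd_form_zero_imp_kernel pS pT by blast+
  hence "of_real m *s x = 0"
    using Dx by (simp add: matrix_vector_mult_diff_rdistrib)
  thus False using m0 x by simp
qed

lemma psd_sqrt_unique:
  fixes S T :: "complex^'n^'n"
  assumes pS: "psd S" and pT: "psd T" and eq: "S ** S = T ** T"
  shows "S = T"
proof -
  define D where "D = S - T"
  have hD: "hermitian D"
    using pS pT by (simp add: D_def psd_def hermitian_def cadj_diff)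
  obtain E where orth: "orthonormal E" and ev: "eigenvectors D E"
    and expansion: "\<And>z. z = (\<Sum>e\<in>E. cinner e z *s e)"
    using hermitian_eigenbasis[OF hD] by blast
  have "cinner e (D *v e) = 0" if e: "e \<in> E" for e
  proof -
    note form = hermitian_form_real[OF hD, of e]
    have "D *v e = cinner e (D *v e) *s e"
      using ev e by (simp add: eigenvectors_def)
    hence "(S - T) *v e = of_real (Re (cinner e (D *v e))) *s e"
      unfolding D_def[symmetric] by (subst (asm) form)
    moreover have "e \<noteq> 0" using orthonormal_norm[OF orth e] by auto
    ultimately have "Re (cinner e (D *v e)) = 0"
      by (rule psd_square_eq_diff_eigenvalue[OF pS pT eq])
    thus ?thesis using form by simp
  qed
  hence "spectral_sum (\<lambda>e. cinner e (D *v e)) E = spectral_sum (\<lambda>e. 0) E"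
    by (rule spectral_sum_cong)
  hence "D = 0"
    using eigenbasis_spectral_sum[OF ev expansion] by (simp add: spectral_sum_def vec_eq_iff)
  thus ?thesis by (simp add: D_def)
qed

lemma psd_sqrt_eqI:
  assumes "psd S" and "S ** S = A"
  shows "psd_sqrt A = S"
  unfolding psd_sqrt_def using assms psd_sqrt_unique by (intro the_equality) blast+

lemma psd_spectral_sum_sqrt:
  assumes fin: "finite E" and orth: "orthonormal E" and l0: "\<And>e. 0 \<le> l e"
  shows "psd_sqrt (spectral_sum (\<lambda>e. of_real (l e)) E) = spectral_sum (\<lambda>e. of_real (sqrt (l e))) E"
proof (rule psd_sqrt_eqI)
  let ?S = "spectral_sum (\<lambda>e. of_real (sqrt (l e))) E"
  have "cinner x (?S *v x) = of_real (\<Sum>e\<in>E. sqrt (l e) * cmod (cinner e x) ^ 2)" for x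
    unfolding form_spectral_sum by simp
  moreover have "hermitian ?S" by (rule hermitian_spectral_sum) simp
  ultimately show "psd ?S" by (simp add: psd_def l0 sum_nonneg)
  show "?S ** ?S = spectral_sum (\<lambda>e. of_real (l e)) E"
    unfolding spectral_sum_mult[OF fin orth]
    by (rule spectral_sum_cong) (simp add: l0 flip: of_real_mult)
qed

lemma psd_spectral_decomposition:
  fixes \<rho> :: "complex^'n^'n"
  assumes p: "psd \<rho>"
  obtains E l where "finite E" "orthonormal E" "\<And>e. 0 \<le> l e"
    "\<rho> = spectral_sum (\<lambda>e. of_real (l e)) E"
proof -
  have h: "hermitian \<rho>" using p by (simp add: psd_def)
  obtain E where fin: "finite E" and orth: "orthonormal E" and ev: "eigenvectors \<rho> E"
    and expansion: "\<And>z. z = (\<Sum>e\<in>E. cinner e z *s e)"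
    using hermitian_eigenbasis[OF h] by blast
  have "\<rho> = spectral_sum (\<lambda>e. cinner e (\<rho> *v e)) E"
    by (rule eigenbasis_spectral_sum[OF ev expansion])
  also have "\<dots> = spectral_sum (\<lambda>e. of_real (Re (cinner e (\<rho> *v e)))) E"
    by (rule spectral_sum_cong) (rule hermitian_form_real[OF h])
  finally have \<rho>: "\<rho> = spectral_sum (\<lambda>e. of_real (Re (cinner e (\<rho> *v e)))) E" .
  have "0 \<le> Re (cinner e (\<rho> *v e))" for e
    using p by (simp add: psd_def)
  from that[OF fin orth this \<rho>] show ?thesis .
qed

lemma norm_spectral_sum_sqrt_adj:
  assumes fin: "finite E" and orth: "orthonormal E" and l0: "\<And>e. 0 \<le> l e"
  shows "norm (spectral_sum (\<lambda>e. of_real (sqrt (l e))) E *v (cadj X *v \<phi>)) ^ 2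
    = (\<Sum>e\<in>E. l e * cmod (cinner (X *v e) \<phi>) ^ 2)"
proof -
  have "spectral_sum (\<lambda>e. of_real (sqrt (l e))) E *v (cadj X *v \<phi>)
      = (\<Sum>e\<in>E. (of_real (sqrt (l e)) * cinner (X *v e) \<phi>) *s e)"
    unfolding spectral_sum_mult_vec using cinner_adj[of _ "cadj X" \<phi>] by simp
  thus ?thesis
    using l0 by (simp add: norm_orthonormal_sum[OF fin orth] norm_mult power_mult_distrib)
qed

section \<open>The trace inequality\<close>

lemma weighted_cauchy_schwarz:
  fixes f :: "'a \<Rightarrow> complex"
  assumes l0: "\<And>e. 0 \<le> l e" and f: "\<And>e. e \<in> E \<Longrightarrow> cmod (f e) \<le> u e * v e"
  shows "cmod (\<Sum>e\<in>E. of_real (l e) * f e)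
    \<le> sqrt (\<Sum>e\<in>E. l e * u e ^ 2) * sqrt (\<Sum>e\<in>E. l e * v e ^ 2)"
proof -
  have "cmod (\<Sum>e\<in>E. of_real (l e) * f e) \<le> (\<Sum>e\<in>E. \<bar>sqrt (l e) * u e\<bar> * \<bar>sqrt (l e) * v e\<bar>)"
  proof (rule order_trans[OF norm_sum], rule sum_mono)
    fix e assume "e \<in> E"
    have "cmod (of_real (l e) * f e) \<le> l e * (u e * v e)"
      using l0[of e] f[OF \<open>e \<in> E\<close>] by (simp add: norm_mult mult_left_mono)
    also have "\<dots> \<le> l e * \<bar>u e * v e\<bar>"
      using l0[of e] by (simp add: mult_left_mono)
    also have "\<dots> = \<bar>sqrt (l e) * u e\<bar> * \<bar>sqrt (l e) * v e\<bar>"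
      using l0[of e] by (simp add: abs_mult real_sqrt_mult[symmetric])
    finally show "cmod (of_real (l e) * f e) \<le> \<dots>" .
  qed
  also have "\<dots> \<le> L2_set (\<lambda>e. sqrt (l e) * u e) E * L2_set (\<lambda>e. sqrt (l e) * v e) E"
    by (rule L2_set_mult_ineq)
  also have "\<dots> = sqrt (\<Sum>e\<in>E. l e * u e ^ 2) * sqrt (\<Sum>e\<in>E. l e * v e ^ 2)"
    using l0 by (simp add: L2_set_def power_mult_distrib)
  finally show ?thesis .
qed

lemma weighted_norm_orth_part:
  assumes l1: "(\<Sum>e\<in>E. l e) = 1" and nx: "\<And>e. e \<in> E \<Longrightarrow> norm (x e) = 1"
    and n\<phi>: "norm \<phi> = 1"
  shows "(\<Sum>e\<in>E. l e * norm (x e - cinner \<phi> (x e) *s \<phi>) ^ 2)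
    = 1 - (\<Sum>e\<in>E. l e * cmod (cinner (x e) \<phi>) ^ 2)"
proof -
  have "(\<Sum>e\<in>E. l e * norm (x e - cinner \<phi> (x e) *s \<phi>) ^ 2)
      = (\<Sum>e\<in>E. l e - l e * cmod (cinner (x e) \<phi>) ^ 2)"
    using cinner_split_along_unit(2)[OF n\<phi>] nx by (intro sum.cong) (simp_all add: right_diff_distrib)
  thus ?thesis using l1 by (simp add: sum_subtractf)
qed

lemma weighted_overlap_le_1:
  assumes l0: "\<And>e. 0 \<le> l e" and l1: "(\<Sum>e\<in>E. l e) = 1"
    and nx: "\<And>e. e \<in> E \<Longrightarrow> norm (x e) = 1" and n\<phi>: "norm \<phi> = 1"
  shows "(\<Sum>e\<in>E. l e * cmod (cinner (x e) \<phi>) ^ 2) \<le> 1"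
proof -
  have "0 \<le> (\<Sum>e\<in>E. l e * norm (x e - cinner \<phi> (x e) *s \<phi>) ^ 2)"
    using l0 by (simp add: sum_nonneg)
  thus ?thesis
    using weighted_norm_orth_part[where x = x, OF l1 nx n\<phi>] by linarith
qed

lemma weighted_inner_bound:
  fixes x y :: "complex^'n \<Rightarrow> complex^'n" and \<phi> :: "complex^'n"
  assumes l0: "\<And>e. 0 \<le> l e" and l1: "(\<Sum>e\<in>E. l e) = 1"
    and nx: "\<And>e. e \<in> E \<Longrightarrow> norm (x e) = 1" and ny: "\<And>e. e \<in> E \<Longrightarrow> norm (y e) = 1"
    and n\<phi>: "norm \<phi> = 1"
  defines "P \<equiv> (\<Sum>e\<in>E. l e * cmod (cinner (x e) \<phi>) ^ 2)"
    and "Q \<equiv> (\<Sum>e\<in>E. l e * cmod (cinner (y e) \<phi>) ^ 2)"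
  shows "cmod (\<Sum>e\<in>E. of_real (l e) * cinner (x e) (y e)) \<le> sqrt P * sqrt Q + sqrt (1 - P) * sqrt (1 - Q)"
proof -
  define x' where "x' e = x e - cinner \<phi> (x e) *s \<phi>" for e
  define y' where "y' e = y e - cinner \<phi> (y e) *s \<phi>" for e
  define along where "along e = cinner (x e) \<phi> * cnj (cinner (y e) \<phi>)" for e
  have "cinner (x e) (y e) = cinner (x' e) (y' e) + along e" for e
    unfolding x'_def y'_def along_def by (rule cinner_split_along_unit(1)[OF n\<phi>])
  hence "(\<Sum>e\<in>E. of_real (l e) * cinner (x e) (y e))
      = (\<Sum>e\<in>E. of_real (l e) * cinner (x' e) (y' e)) + (\<Sum>e\<in>E. of_real (l e) * along e)"
    by (simp add: distrib_left sum.distrib)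
  hence "cmod (\<Sum>e\<in>E. of_real (l e) * cinner (x e) (y e))
      \<le> cmod (\<Sum>e\<in>E. of_real (l e) * cinner (x' e) (y' e)) + cmod (\<Sum>e\<in>E. of_real (l e) * along e)"
    by (simp add: norm_triangle_ineq)
  also have "cmod (\<Sum>e\<in>E. of_real (l e) * cinner (x' e) (y' e))
      \<le> sqrt (\<Sum>e\<in>E. l e * norm (x' e) ^ 2) * sqrt (\<Sum>e\<in>E. l e * norm (y' e) ^ 2)"
    using l0 cinner_cauchy_schwarz by (rule weighted_cauchy_schwarz)
  also have "\<dots> = sqrt (1 - P) * sqrt (1 - Q)"
    unfolding x'_def y'_def P_def Q_def
    using weighted_norm_orth_part[OF l1 nx n\<phi>] weighted_norm_orth_part[OF l1 ny n\<phi>] by simp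
  also have "cmod (\<Sum>e\<in>E. of_real (l e) * along e) \<le> sqrt P * sqrt Q"
    unfolding P_def Q_def along_def
    using l0 by (rule weighted_cauchy_schwarz) (simp add: norm_mult)
  finally show ?thesis by simp
qed

lemma cos_arccos_diff:
  assumes "0 \<le> p" "p \<le> 1" "0 \<le> q" "q \<le> 1"
  shows "cos (arccos p - arccos q) = p * q + sqrt (1 - p^2) * sqrt (1 - q^2)"
  using assms by (simp add: cos_diff sin_arccos)

lemma trace_isometries_le_cos:
  fixes X Y :: "complex^'n^'n"
  assumes fin: "finite E" and orth: "orthonormal E" and l0: "\<And>e. 0 \<le> l e"
    and l1: "(\<Sum>e\<in>E. l e) = 1"
    and X: "cadj X ** X = mat 1" and Y: "cadj Y ** Y = mat 1" and n\<phi>: "norm \<phi> = 1"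
  defines "S \<equiv> spectral_sum (\<lambda>e. of_real (sqrt (l e))) E"
  shows "cmod (ctrace (cadj X ** Y ** spectral_sum (\<lambda>e. of_real (l e)) E))
    \<le> cos (arccos (norm (S *v (cadj X *v \<phi>))) - arccos (norm (S *v (cadj Y *v \<phi>))))"
proof -
  define p where "p = norm (S *v (cadj X *v \<phi>))"
  define q where "q = norm (S *v (cadj Y *v \<phi>))"
  have unit: "norm (X *v e) = 1" "norm (Y *v e) = 1" if "e \<in> E" for e
    using orthonormal_norm[OF orth that] by (simp_all add: isometry_norm[OF X] isometry_norm[OF Y])
  have p2: "p^2 = (\<Sum>e\<in>E. l e * cmod (cinner (X *v e) \<phi>) ^ 2)"
    and q2: "q^2 = (\<Sum>e\<in>E. l e * cmod (cinner (Y *v e) \<phi>) ^ 2)"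
    unfolding p_def q_def S_def by (simp_all add: norm_spectral_sum_sqrt_adj[OF fin orth l0])
  have "p^2 \<le> 1" "q^2 \<le> 1"
    unfolding p2 q2
    using weighted_overlap_le_1[where x = "\<lambda>e. X *v e", OF l0 l1 unit(1) n\<phi>]
      weighted_overlap_le_1[where x = "\<lambda>e. Y *v e", OF l0 l1 unit(2) n\<phi>] by simp_all
  hence "p \<le> 1" "q \<le> 1" by (simp_all add: p_def q_def power_le_one_iff)
  have "ctrace (cadj X ** Y ** spectral_sum (\<lambda>e. of_real (l e)) E)
      = (\<Sum>e\<in>E. of_real (l e) * cinner (X *v e) (Y *v e))"
    using cinner_adj[of _ "cadj X"] by (simp add: ctrace_mult_spectral_sum matrix_vector_mul_assoc[symmetric])
  also have "cmod \<dots> \<le> sqrt (p^2) * sqrt (q^2) + sqrt (1 - p^2) * sqrt (1 - q^2)"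
    unfolding p2 q2
    by (rule weighted_inner_bound[where x = "\<lambda>e. X *v e" and y = "\<lambda>e. Y *v e", OF l0 l1 unit n\<phi>])
  also have "\<dots> = cos (arccos p - arccos q)"
    using \<open>p \<le> 1\<close> \<open>q \<le> 1\<close> by (simp add: cos_arccos_diff p_def q_def)
  finally show ?thesis by (simp add: p_def q_def)
qed

theorem theorem5:
  fixes \<rho> V W :: "complex^'n^'n" and \<phi> :: "complex^'n"
  assumes "density_op \<rho>" and "unitary V" and "unitary W" and "norm \<phi> = 1"
  shows "cmod (ctrace (cadj W ** cadj V ** W ** V ** \<rho>))
     \<le> cos (arccos (norm (psd_sqrt \<rho> *v (cadj (V ** W) *v \<phi>)))
            - arccos (norm (psd_sqrt \<rho> *v (cadj (W ** V) *v \<phi>))))"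
proof -
  have psd: "psd \<rho>" and tr: "ctrace \<rho> = 1"
    using assms(1) by (auto simp: density_op_def)
  obtain E l where fin: "finite E" and orth: "orthonormal E" and l0: "\<And>e. 0 \<le> l e"
    and \<rho>: "\<rho> = spectral_sum (\<lambda>e. of_real (l e)) E"
    using psd_spectral_decomposition[OF psd] by blast
  have l1: "(\<Sum>e\<in>E. l e) = 1"
    using tr unfolding \<rho> ctrace_spectral_sum[OF orth] by (metis of_real_eq_1_iff of_real_sum)
  have VW: "cadj (V ** W) ** (V ** W) = mat 1" and WV: "cadj (W ** V) ** (W ** V) = mat 1"
    using assms(2,3) by (simp_all add: unitary_def isometry_mult)
  have "cadj W ** cadj V ** W ** V ** \<rho> = cadj (V ** W) ** (W ** V) ** \<rho>"
    by (simp add: cadj_mult matrix_mul_assoc)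
  thus ?thesis
    using trace_isometries_le_cos[OF fin orth l0 l1 VW WV assms(4)]
    by (simp add: \<rho> psd_spectral_sum_sqrt[OF fin orth l0])
qed

end
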